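(* If $(\Lambda,Y)$ is an extensible graph with parameters $(t,s,\bar s)$, then its complementary graph $(\bar\Lambda,Y)$ is also extensible, and its parameters $(\bar t,s',\bar s')$ satisfy $s'=\bar s$, $\bar s'=s$ and $t+\bar t=s+\bar s-2=s'+\bar s'-2$.
   Context: A finite simple graph $(\Lambda,Y)$ is extensible with parameters $(t,s,\bar s)$ (nonnegative integers) if: (1) $\Lambda$ has diameter $2$; (2) for every $y\in Y$, with $\Lambda(y,d)$ the set of vertices at distance $d$ from $y$: (a) $|\Lambda(y,1)|=2s$; (b) $|\Lambda(y,2)|=2\bar s$; (c) every $z\in\Lambda(y,1)$ is adjacent to exactly $\bar s$ points of $\Lambda(y,2)$ and exactly $t=2s-\bar s-1$ points of $\Lambda(y,1)$; (d) every $z\in\Lambda(y,2)$ is adjacent to exactly $s$ points of $\Lambda(y,2)$ and exactly $s$ points of $\Lambda(y,1)$; (3) every edge lies in exactly $t$ triangles; (4) $|Y|=1+2s+2\bar s$. The complementary graph $(\bar\Lambda,Y)$ has vertex set $Y$ and as edges the non-edges of $\Lambda$. *)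

theory Defs
  imports Main
begin

definition simple_graph :: "('a \<Rightarrow> 'a \<Rightarrow> bool) \<Rightarrow> 'a set \<Rightarrow> bool" where
  "simple_graph E Y \<longleftrightarrow> finite Y \<and> (\<forall>x y. E x y \<longrightarrow> x \<in> Y \<and> y \<in> Y)
     \<and> (\<forall>x y. E x y \<longrightarrow> E y x) \<and> (\<forall>x. \<not> E x x)"

definition walk :: "('a \<Rightarrow> 'a \<Rightarrow> bool) \<Rightarrow> 'a set \<Rightarrow> nat \<Rightarrow> 'a \<Rightarrow> 'a \<Rightarrow> bool" where
  "walk E Y n x y \<longleftrightarrow> (\<exists>f :: nat \<Rightarrow> 'a. f 0 = x \<and> f n = y \<and> (\<forall>i\<le>n. f i \<in> Y)
     \<and> (\<forall>i<n. E (f i) (f (Suc i))))"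

definition connected_to :: "('a \<Rightarrow> 'a \<Rightarrow> bool) \<Rightarrow> 'a set \<Rightarrow> 'a \<Rightarrow> 'a \<Rightarrow> bool" where
  "connected_to E Y x y \<longleftrightarrow> (\<exists>n. walk E Y n x y)"

text \<open>Graph distance (meaningful when x and y are connected).\<close>
definition gdist :: "('a \<Rightarrow> 'a \<Rightarrow> bool) \<Rightarrow> 'a set \<Rightarrow> 'a \<Rightarrow> 'a \<Rightarrow> nat" where
  "gdist E Y x y = (LEAST n. walk E Y n x y)"

definition diameter2 :: "('a \<Rightarrow> 'a \<Rightarrow> bool) \<Rightarrow> 'a set \<Rightarrow> bool" where
  "diameter2 E Y \<longleftrightarrow> (\<forall>x\<in>Y. \<forall>y\<in>Y. connected_to E Y x y \<and> gdist E Y x y \<le> 2)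
     \<and> (\<exists>x\<in>Y. \<exists>y\<in>Y. gdist E Y x y = 2)"

definition sphere :: "('a \<Rightarrow> 'a \<Rightarrow> bool) \<Rightarrow> 'a set \<Rightarrow> 'a \<Rightarrow> nat \<Rightarrow> 'a set" where
  "sphere E Y y d = {z \<in> Y. connected_to E Y y z \<and> gdist E Y y z = d}"

definition extensible :: "('a \<Rightarrow> 'a \<Rightarrow> bool) \<Rightarrow> 'a set \<Rightarrow> nat \<Rightarrow> nat \<Rightarrow> nat \<Rightarrow> bool" where
  "extensible E Y t s sb \<longleftrightarrow>
     simple_graph E Y \<and>
     int t = 2 * int s - int sb - 1 \<and>
     diameter2 E Y \<and>
     (\<forall>y\<in>Y.
        card (sphere E Y y 1) = 2 * s \<and>
        card (sphere E Y y 2) = 2 * sb \<and>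
        (\<forall>z\<in>sphere E Y y 1.
           card {w \<in> sphere E Y y 2. E z w} = sb \<and>
           card {w \<in> sphere E Y y 1. E z w} = t) \<and>
        (\<forall>z\<in>sphere E Y y 2.
           card {w \<in> sphere E Y y 2. E z w} = s \<and>
           card {w \<in> sphere E Y y 1. E z w} = s)) \<and>
     (\<forall>x y. E x y \<longrightarrow> card {z \<in> Y. E x z \<and> E y z} = t) \<and>
     card Y = 1 + 2 * s + 2 * sb"

definition compl_graph :: "('a \<Rightarrow> 'a \<Rightarrow> bool) \<Rightarrow> 'a set \<Rightarrow> 'a \<Rightarrow> 'a \<Rightarrow> bool" where
  "compl_graph E Y x y \<longleftrightarrow> x \<in> Y \<and> y \<in> Y \<and> x \<noteq> y \<and> \<not> E x y"

end

theory Submission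
  imports Defs
begin

text \<open>When every two distinct vertices are adjacent or have a common neighbour, graph
  distance is determined by adjacency, so the spheres of radius 1 and 2 are the
  neighbourhood and the set of other non-neighbours. Complementation swaps these two sets,
  and each counting condition for the complement follows from one for the graph by
  counting non-neighbours instead of neighbours; for instance a non-neighbour of y has
  2 sb - s - 1 complement-neighbours among the other non-neighbours of y, which gives the
  complementary parameter. The complement again has diameter 2 because the two ends of an
  edge have sb > 0 common non-neighbours.\<close>

lemma walk_0_iff: "walk E Y 0 x y \<longleftrightarrow> x = y \<and> x \<in> Y"
  unfolding walk_def by (rule iffI) (force, rule exI[of _ "\<lambda>_. x"], auto)

lemma walk_1_iff: "walk E Y 1 x y \<longleftrightarrow> x \<in> Y \<and> y \<in> Y \<and> E x y"
  unfolding walk_def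
  by (rule iffI) (metis One_nat_def le_refl less_one zero_le,
      rule exI[of _ "\<lambda>i. if i = 0 then x else y"], auto)

lemma walk_2_iff: "walk E Y 2 x y \<longleftrightarrow> x \<in> Y \<and> y \<in> Y \<and> (\<exists>z\<in>Y. E x z \<and> E z y)"
  unfolding walk_def
proof
  assume "\<exists>f. f 0 = x \<and> f 2 = y \<and> (\<forall>i\<le>2. f i \<in> Y) \<and> (\<forall>i<2. E (f i) (f (Suc i)))"
  then obtain f where "f 0 = x" "f 2 = y" "\<forall>i\<le>2. f i \<in> Y" "\<forall>i<2. E (f i) (f (Suc i))"
    by blast
  moreover have "E (f 0) (f 1)" "E (f 1) (f 2)"
    using \<open>\<forall>i<2. E (f i) (f (Suc i))\<close> by (auto simp: numeral_2_eq_2)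
  ultimately show "x \<in> Y \<and> y \<in> Y \<and> (\<exists>z\<in>Y. E x z \<and> E z y)"
    by (metis le_refl one_le_numeral zero_le)
next
  assume "x \<in> Y \<and> y \<in> Y \<and> (\<exists>z\<in>Y. E x z \<and> E z y)"
  then obtain z where "x \<in> Y" "y \<in> Y" "z \<in> Y" "E x z" "E z y" by blast
  then show "\<exists>f. f 0 = x \<and> f 2 = y \<and> (\<forall>i\<le>2. f i \<in> Y) \<and> (\<forall>i<2. E (f i) (f (Suc i)))"
    by (intro exI[of _ "\<lambda>i. if i = 0 then x else if i = 1 then z else y"])
      (auto simp: less_2_cases_iff)
qed

definition diameter_le2 :: "('a \<Rightarrow> 'a \<Rightarrow> bool) \<Rightarrow> 'a set \<Rightarrow> bool" where
  "diameter_le2 E Y \<longleftrightarrow> (\<forall>x\<in>Y. \<forall>y\<in>Y. x = y \<or> E x y \<or> (\<exists>z\<in>Y. E x z \<and> E z y))"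

definition neighbours :: "('a \<Rightarrow> 'a \<Rightarrow> bool) \<Rightarrow> 'a set \<Rightarrow> 'a \<Rightarrow> 'a set" where
  "neighbours E Y y = {z \<in> Y. E y z}"

definition non_neighbours :: "('a \<Rightarrow> 'a \<Rightarrow> bool) \<Rightarrow> 'a set \<Rightarrow> 'a \<Rightarrow> 'a set" where
  "non_neighbours E Y y = {z \<in> Y. z \<noteq> y \<and> \<not> E y z}"

lemma gdist_eq:
  assumes "simple_graph E Y" "diameter_le2 E Y" "x \<in> Y" "y \<in> Y"
  shows "connected_to E Y x y \<and> gdist E Y x y = (if x = y then 0 else if E x y then 1 else 2)"
proof -
  define d :: nat where "d = (if x = y then 0 else if E x y then 1 else 2)"
  have walk: "walk E Y d x y"
    using assms unfolding diameter_le2_def d_def by (auto simp: walk_0_iff walk_1_iff[simplified] walk_2_iff)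
  have "\<not> walk E Y m x y" if "m < d" for m
    using that unfolding d_def
    by (auto simp: walk_0_iff walk_1_iff[simplified] less_2_cases_iff split: if_splits)
  then have "gdist E Y x y = d"
    unfolding gdist_def by (intro Least_equality walk) (meson not_le)
  with walk show ?thesis unfolding connected_to_def d_def by blast
qed

lemma sphere_1_eq_neighbours:
  assumes "simple_graph E Y" "diameter_le2 E Y" "y \<in> Y"
  shows "sphere E Y y 1 = neighbours E Y y"
  using gdist_eq[OF assms] assms(1)
  unfolding sphere_def neighbours_def simple_graph_def by (auto split: if_splits)

lemma sphere_2_eq_non_neighbours:
  assumes "simple_graph E Y" "diameter_le2 E Y" "y \<in> Y"
  shows "sphere E Y y 2 = non_neighbours E Y y"
  using gdist_eq[OF assms] unfolding sphere_def non_neighbours_def by (auto split: if_splits)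

lemma diameter2_iff:
  assumes "simple_graph E Y"
  shows "diameter2 E Y \<longleftrightarrow> diameter_le2 E Y \<and> (\<exists>x\<in>Y. \<exists>y\<in>Y. x \<noteq> y \<and> \<not> E x y)"
proof
  assume diam: "diameter2 E Y"
  have le2: "diameter_le2 E Y"
    unfolding diameter_le2_def
  proof (intro ballI)
    fix x y assume "x \<in> Y" "y \<in> Y"
    with diam have "connected_to E Y x y" "gdist E Y x y \<le> 2"
      unfolding diameter2_def by auto
    then have "walk E Y (gdist E Y x y) x y" and "gdist E Y x y \<in> {0, 1, 2}"
      unfolding connected_to_def gdist_def by (auto intro: LeastI)
    then show "x = y \<or> E x y \<or> (\<exists>z\<in>Y. E x z \<and> E z y)"
      by (auto simp: walk_0_iff walk_1_iff[simplified] walk_2_iff)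
  qed
  moreover obtain x y where "x \<in> Y" "y \<in> Y" "gdist E Y x y = 2"
    using diam unfolding diameter2_def by blast
  ultimately show "diameter_le2 E Y \<and> (\<exists>x\<in>Y. \<exists>y\<in>Y. x \<noteq> y \<and> \<not> E x y)"
    using gdist_eq[OF assms le2, of x y] by (auto split: if_splits)
next
  assume "diameter_le2 E Y \<and> (\<exists>x\<in>Y. \<exists>y\<in>Y. x \<noteq> y \<and> \<not> E x y)"
  then show "diameter2 E Y"
    using gdist_eq[OF assms] unfolding diameter2_def by auto
qed

lemma simple_graph_compl_graph: "simple_graph E Y \<Longrightarrow> simple_graph (compl_graph E Y) Y"
  unfolding simple_graph_def compl_graph_def by blast

lemma neighbours_compl_graph:
  "y \<in> Y \<Longrightarrow> neighbours (compl_graph E Y) Y y = non_neighbours E Y y"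
  unfolding neighbours_def non_neighbours_def compl_graph_def by auto

lemma non_neighbours_compl_graph:
  "simple_graph E Y \<Longrightarrow> y \<in> Y \<Longrightarrow> non_neighbours (compl_graph E Y) Y y = neighbours E Y y"
  unfolding neighbours_def non_neighbours_def compl_graph_def simple_graph_def by auto

lemma card_compl_graph_adjacent:
  assumes "finite A" "A \<subseteq> Y" "z \<in> Y" "\<not> E z z"
  shows "card {w \<in> A. compl_graph E Y z w} + card {w \<in> A. E z w} + (if z \<in> A then 1 else 0)
    = card A"
proof -
  let ?C = "{w \<in> A. compl_graph E Y z w}" and ?N = "{w \<in> A. E z w}"
  have "A = (?C \<union> ?N) \<union> (A \<inter> {z})"
    using assms(2,3) unfolding compl_graph_def by auto
  then have "card A = card ((?C \<union> ?N) \<union> (A \<inter> {z}))"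
    by (rule arg_cong)
  also have "\<dots> = card (?C \<union> ?N) + card (A \<inter> {z})"
    using assms(1,4) by (intro card_Un_disjoint) (auto simp: compl_graph_def)
  also have "card (?C \<union> ?N) = card ?C + card ?N"
    using assms(1) by (intro card_Un_disjoint) (auto simp: compl_graph_def)
  also have "card (A \<inter> {z}) = (if z \<in> A then 1 else 0)"
    by auto
  finally show ?thesis by simp
qed

definition extensible_at :: "('a \<Rightarrow> 'a \<Rightarrow> bool) \<Rightarrow> 'a set \<Rightarrow> nat \<Rightarrow> nat \<Rightarrow> nat \<Rightarrow> 'a \<Rightarrow> bool"
  where
  "extensible_at E Y t s sb y \<longleftrightarrow>
     card (neighbours E Y y) = 2 * s \<and>
     card (non_neighbours E Y y) = 2 * sb \<and>
     (\<forall>z\<in>neighbours E Y y.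
        card {w \<in> non_neighbours E Y y. E z w} = sb \<and>
        card {w \<in> neighbours E Y y. E z w} = t) \<and>
     (\<forall>z\<in>non_neighbours E Y y.
        card {w \<in> non_neighbours E Y y. E z w} = s \<and>
        card {w \<in> neighbours E Y y. E z w} = s)"

lemma extensible_at_triangles:
  assumes "simple_graph E Y" "extensible_at E Y t s sb x" "E x y"
  shows "card {z \<in> Y. E x z \<and> E y z} = t"
proof -
  have "y \<in> neighbours E Y x" and "{z \<in> Y. E x z \<and> E y z} = {w \<in> neighbours E Y x. E y w}"
    using assms(1,3) unfolding neighbours_def simple_graph_def by auto
  with assms(2) show ?thesis unfolding extensible_at_def by simp
qed

lemma extensible_at_diameter_le2:
  assumes "simple_graph E Y" "\<forall>y\<in>Y. extensible_at E Y t s sb y" "0 < s"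
  shows "diameter_le2 E Y"
  unfolding diameter_le2_def
proof (intro ballI)
  fix x y assume "x \<in> Y" "y \<in> Y"
  show "x = y \<or> E x y \<or> (\<exists>z\<in>Y. E x z \<and> E z y)"
  proof (cases "x = y \<or> E x y")
    case False
    then have "y \<in> non_neighbours E Y x"
      using \<open>y \<in> Y\<close> unfolding non_neighbours_def by auto
    with assms(2) \<open>x \<in> Y\<close> have "card {w \<in> neighbours E Y x. E y w} = s"
      unfolding extensible_at_def by blast
    with assms(3) have "{w \<in> neighbours E Y x. E y w} \<noteq> {}"
      by force
    then show ?thesis
      using assms(1) unfolding neighbours_def simple_graph_def by blast
  qed blast
qed

lemma extensible_at_compl_graph:
  assumes sg: "simple_graph E Y" and y: "y \<in> Y" and at: "extensible_at E Y t s sb y"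
    and t: "int t = 2 * int s - int sb - 1"
  shows "extensible_at (compl_graph E Y) Y (2 * sb - s - 1) sb s y"
proof -
  let ?N = "neighbours E Y y" and ?M = "non_neighbours E Y y"
  have count: "card {w \<in> A. compl_graph E Y z w}
      = card A - card {w \<in> A. E z w} - (if z \<in> A then 1 else 0)"
    if "A \<subseteq> Y" "z \<in> Y" for A z
  proof -
    have "finite A" "\<not> E z z"
      using sg that(1) finite_subset unfolding simple_graph_def by auto
    from card_compl_graph_adjacent[of A Y z E, OF this(1) that this(2)] show ?thesis
      by linarith
  qed
  have sub: "?N \<subseteq> Y" "?M \<subseteq> Y" and disj: "?N \<inter> ?M = {}"
    unfolding neighbours_def non_neighbours_def by auto
  show ?thesis
    unfolding extensible_at_def neighbours_compl_graph[OF y] non_neighbours_compl_graph[OF sg y]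
  proof (intro conjI ballI)
    show "card ?M = 2 * sb" "card ?N = 2 * s"
      using at unfolding extensible_at_def by auto
  next
    fix z assume z: "z \<in> ?M"
    then have "z \<in> Y" "z \<notin> ?N" using sub disj by auto
    with z at show "card {w \<in> ?N. compl_graph E Y z w} = s"
      and "card {w \<in> ?M. compl_graph E Y z w} = 2 * sb - s - 1"
      unfolding extensible_at_def by (simp_all add: count sub)
  next
    fix z assume z: "z \<in> ?N"
    then have "z \<in> Y" "z \<notin> ?M" using sub disj by auto
    with z at t show "card {w \<in> ?N. compl_graph E Y z w} = sb"
      and "card {w \<in> ?M. compl_graph E Y z w} = sb"
      unfolding extensible_at_def by (simp_all add: count sub)
  qed
qed

lemma extensible_iff:
  "extensible E Y t s sb \<longleftrightarrow>
     simple_graph E Y \<and> int t = 2 * int s - int sb - 1 \<and> diameter2 E Y \<and>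
     (\<forall>y\<in>Y. extensible_at E Y t s sb y) \<and> card Y = 1 + 2 * s + 2 * sb"
proof (cases "simple_graph E Y \<and> diameter2 E Y")
  case True
  then have sg: "simple_graph E Y" and le2: "diameter_le2 E Y"
    using diameter2_iff by blast+
  have "card {z \<in> Y. E x z \<and> E y z} = t"
    if "\<forall>y\<in>Y. extensible_at E Y t s sb y" "E x y" for x y
    using extensible_at_triangles[OF sg _ that(2)] that sg unfolding simple_graph_def by blast
  then show ?thesis
    using True unfolding extensible_def extensible_at_def
    by (auto simp: sphere_1_eq_neighbours[OF sg le2, simplified] sphere_2_eq_non_neighbours[OF sg le2])
qed (auto simp: extensible_def)

lemma extensible_params_unique:
  assumes "extensible E Y t s sb" "extensible E Y t' s' sb'"
  shows "t' = t \<and> s' = s \<and> sb' = sb"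
proof -
  have "Y \<noteq> {}"
    using assms(1) unfolding extensible_def by auto
  then obtain y where "y \<in> Y" by blast
  with assms have "s' = s" "sb' = sb"
    unfolding extensible_def by auto
  with assms show ?thesis
    unfolding extensible_def by linarith
qed

lemma extensible_compl_graph:
  assumes "extensible E Y t s sb"
  shows "extensible (compl_graph E Y) Y (2 * sb - s - 1) sb s"
proof -
  have sg: "simple_graph E Y" and t: "int t = 2 * int s - int sb - 1"
    and diam: "diameter2 E Y" and at: "\<forall>y\<in>Y. extensible_at E Y t s sb y"
    and card_Y: "card Y = 1 + 2 * s + 2 * sb"
    using assms unfolding extensible_iff by blast+
  then obtain x y where x: "x \<in> Y" and y: "y \<in> Y" and "x \<noteq> y" "\<not> E x y"
    and le2: "diameter_le2 E Y"
    using diameter2_iff by blast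
  then obtain w where w: "w \<in> Y" "E x w"
    unfolding diameter_le2_def by blast
  have y_non_nb: "y \<in> non_neighbours E Y x"
    using y \<open>x \<noteq> y\<close> \<open>\<not> E x y\<close> unfolding non_neighbours_def by auto
  have "card {v \<in> non_neighbours E Y x. compl_graph E Y y v} + s + 1 = 2 * sb"
    using card_compl_graph_adjacent[of "non_neighbours E Y x" Y y E] y_non_nb at x y sg
    unfolding extensible_at_def simple_graph_def non_neighbours_def by auto
  then have s_lt: "s < 2 * sb" and "0 < sb"
    by linarith+
  have sgC: "simple_graph (compl_graph E Y) Y"
    by (rule simple_graph_compl_graph[OF sg])
  have atC: "\<forall>y\<in>Y. extensible_at (compl_graph E Y) Y (2 * sb - s - 1) sb s y"
    using extensible_at_compl_graph[OF sg _ _ t] at by blast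
  have "x \<noteq> w" "\<not> compl_graph E Y x w"
    using sg w unfolding simple_graph_def compl_graph_def by auto
  then have "diameter2 (compl_graph E Y) Y"
    using diameter2_iff[OF sgC] extensible_at_diameter_le2[OF sgC atC \<open>0 < sb\<close>] x w by blast
  with sgC atC s_lt card_Y show ?thesis
    unfolding extensible_iff by auto
qed

theorem proposition6:
  fixes E :: "'a \<Rightarrow> 'a \<Rightarrow> bool" and Y :: "'a set" and t s sb :: nat
  assumes "extensible E Y t s sb"
  shows "(\<exists>tb. extensible (compl_graph E Y) Y tb sb s)
    \<and> (\<forall>tb s' sb'. extensible (compl_graph E Y) Y tb s' sb' \<longrightarrow>
         s' = sb \<and> sb' = s \<and>
         int t + int tb = int s + int sb - 2 \<and> int t + int tb = int s' + int sb' - 2)"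
proof -
  have compl: "extensible (compl_graph E Y) Y (2 * sb - s - 1) sb s"
    using assms by (rule extensible_compl_graph)
  moreover have "s' = sb \<and> sb' = s \<and>
      int t + int tb = int s + int sb - 2 \<and> int t + int tb = int s' + int sb' - 2"
    if "extensible (compl_graph E Y) Y tb s' sb'" for tb s' sb'
    using extensible_params_unique[OF compl that] assms that
    unfolding extensible_def by auto
  ultimately show ?thesis by blast
qed

end
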